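(* Let $\lambda=\Theta\Rightarrow\Omega$ and $\lambda^*$ be as in the context. For every model $\mathcal{M}=\langle W,V\rangle$, $w\in W$ and $X\subseteq W$: $\mathcal{M},w,X\vDash\lambda$ if and only if $\mathcal{M},w,X\vDash\lambda^*$, where $\vDash$ is the Kolodny–MacFarlane semantics.
   Context: Formulas: $\varphi::= p\mid \neg\varphi\mid (\varphi\wedge\varphi)\mid \Box\varphi \mid (\varphi\Rightarrow\varphi)$; $\vee,\to,\bot$ as usual, $\Diamond\varphi:=\neg\Box\neg\varphi$; nonmodal formulas contain neither $\Box$ nor $\Rightarrow$. Models $\mathcal{M}=\langle W,V\rangle$: $W$ nonempty, $V(p)\subseteq W$. Kolodny–MacFarlane semantics at $\mathcal{M},w,X$ ($w\in W$, $X\subseteq W$): $p$ true iff $w\in V(p)$; $\neg,\wedge$ Boolean; $\Box\varphi$ true iff $\varphi$ is true at $\mathcal{M},v,X$ for all $v\in X$; $\varphi\Rightarrow\psi$ true iff $\mathcal{M},w,X'\vDash\Box\psi$ for every $X'$ with (i) $X'\subseteq X$, (ii) $X'\subseteq\llbracket\varphi\rrbracket^{\mathcal{M},X'}$, (iii) no $X''$ satisfying (i),(ii) has $X'\subsetneq X''$; here $\llbracket\varphi\rrbracket^{\mathcal{M},Y}=\{v\in Y\mid \mathcal{M},v,Y\vDash\varphi\}$. Let $\lambda=\Theta\Rightarrow\Omega$ with $\Theta=\bigvee_{i\in I}\theta_i$, $\Omega=\bigvee_{j\in J}\omega_j$ ($I,J$ finite), $\theta_i=\varphi_i\wedge\Box\psi_i\wedge\bigwedge_{n\in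 D_i}\Diamond\chi_n$, $\omega_j=\alpha_j\wedge\Box\beta_j\wedge\bigwedge_{m\in E_j}\Diamond\gamma_m$, all $\varphi_i,\psi_i,\chi_n,\alpha_j,\beta_j,\gamma_m$ nonmodal. For $K\subseteq I$: $\mathtt{info}_K:=(\bigvee_{k\in K}\varphi_k)\wedge\bigwedge_{k\in K}\psi_k$; $\mathtt{good}_K:=\bigwedge_{k\in K}\bigwedge_{n\in D_k}\Diamond(\mathtt{info}_K\wedge\chi_n)$; $\mathtt{max}_K:=\mathtt{good}_K\wedge\bigwedge_{L\subseteq I}\big((\Box(\mathtt{info}_K\to\mathtt{info}_L)\wedge\Diamond(\neg\mathtt{info}_K\wedge\mathtt{info}_L))\to\neg\mathtt{good}_L\big)$. For $S\subseteq J$: $\mathtt{state}_S:=\bigwedge_{s\in S}\alpha_s\wedge\bigwedge_{s\in J\setminus S}\neg\alpha_s$. Then $\lambda^*:=\bigwedge_{K\subseteq I}\Big(\mathtt{max}_K\to\Box\big(\mathtt{info}_K\to\bigwedge_{S\subseteq J}(\mathtt{state}_S\to\bigvee_{s\in S}(\Box(\mathtt{info}_K\to\beta_s)\wedge\bigwedge_{m\in E_s}\Diamond(\mathtt{info}_K\wedge\gamma_m)))\big)\Big)$, with empty disjunction $\bot$ and empty conjunction $\top$. *)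

theory Defs
  imports Main
begin

datatype 'p form =
    Atom 'p
  | Neg "'p form"
  | And "'p form" "'p form"
  | Box "'p form"
  | Cond "'p form" "'p form"

definition Bot :: "'p form" where "Bot = And (Atom undefined) (Neg (Atom undefined))"
definition Top :: "'p form" where "Top = Neg Bot"
definition Or :: "'p form \<Rightarrow> 'p form \<Rightarrow> 'p form" where "Or a b = Neg (And (Neg a) (Neg b))"
definition Imp :: "'p form \<Rightarrow> 'p form \<Rightarrow> 'p form" where "Imp a b = Neg (And a (Neg b))"
definition Dia :: "'p form \<Rightarrow> 'p form" where "Dia a = Neg (Box (Neg a))"

fun nonmodal :: "'p form \<Rightarrow> bool" where
  "nonmodal (Atom p) = True"
| "nonmodal (Neg a) = nonmodal a"
| "nonmodal (And a b) = (nonmodal a \<and> nonmodal b)"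
| "nonmodal (Box a) = False"
| "nonmodal (Cond a b) = False"

definition enum :: "'a set \<Rightarrow> 'a list" where "enum S = (SOME xs. set xs = S)"

fun BigOrL :: "'p form list \<Rightarrow> 'p form" where
  "BigOrL [] = Bot"
| "BigOrL (x # xs) = Or x (BigOrL xs)"

fun BigAndL :: "'p form list \<Rightarrow> 'p form" where
  "BigAndL [] = Top"
| "BigAndL (x # xs) = And x (BigAndL xs)"

definition BigOr :: "('a \<Rightarrow> 'p form) \<Rightarrow> 'a set \<Rightarrow> 'p form" where
  "BigOr f S = BigOrL (map f (enum S))"

definition BigAnd :: "('a \<Rightarrow> 'p form) \<Rightarrow> 'a set \<Rightarrow> 'p form" where
  "BigAnd f S = BigAndL (map f (enum S))"

definition is_model :: "'w set \<Rightarrow> ('p \<Rightarrow> 'w set) \<Rightarrow> bool" where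
  "is_model W V \<longleftrightarrow> W \<noteq> {} \<and> (\<forall>p. V p \<subseteq> W)"

fun sat :: "('p \<Rightarrow> 'w set) \<Rightarrow> 'w \<Rightarrow> 'w set \<Rightarrow> 'p form \<Rightarrow> bool" where
  "sat V w X (Atom p) = (w \<in> V p)"
| "sat V w X (Neg a) = (\<not> sat V w X a)"
| "sat V w X (And a b) = (sat V w X a \<and> sat V w X b)"
| "sat V w X (Box a) = (\<forall>v\<in>X. sat V v X a)"
| "sat V w X (Cond a b) =
     (\<forall>X'. (X' \<subseteq> X \<and> X' \<subseteq> {v\<in>X'. sat V v X' a}
            \<and> \<not> (\<exists>X''. X'' \<subseteq> X \<and> X'' \<subseteq> {v\<in>X''. sat V v X'' a} \<and> X' \<subset> X''))
          \<longrightarrow> (\<forall>v\<in>X'. sat V v X' b))"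

definition Theta :: "'i set \<Rightarrow> ('i \<Rightarrow> 'p form) \<Rightarrow> ('i \<Rightarrow> 'p form) \<Rightarrow> ('i \<Rightarrow> 'n set)
    \<Rightarrow> ('n \<Rightarrow> 'p form) \<Rightarrow> 'p form" where
  "Theta I \<phi> \<psi> D \<chi> = BigOr (\<lambda>i. And (\<phi> i) (And (Box (\<psi> i)) (BigAnd (\<lambda>n. Dia (\<chi> n)) (D i)))) I"

definition info :: "('i \<Rightarrow> 'p form) \<Rightarrow> ('i \<Rightarrow> 'p form) \<Rightarrow> 'i set \<Rightarrow> 'p form" where
  "info \<phi> \<psi> K = And (BigOr \<phi> K) (BigAnd \<psi> K)"

definition good :: "('i \<Rightarrow> 'p form) \<Rightarrow> ('i \<Rightarrow> 'p form) \<Rightarrow> ('i \<Rightarrow> 'n set)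
    \<Rightarrow> ('n \<Rightarrow> 'p form) \<Rightarrow> 'i set \<Rightarrow> 'p form" where
  "good \<phi> \<psi> D \<chi> K = BigAnd (\<lambda>k. BigAnd (\<lambda>n. Dia (And (info \<phi> \<psi> K) (\<chi> n))) (D k)) K"

definition maxi :: "'i set \<Rightarrow> ('i \<Rightarrow> 'p form) \<Rightarrow> ('i \<Rightarrow> 'p form) \<Rightarrow> ('i \<Rightarrow> 'n set)
    \<Rightarrow> ('n \<Rightarrow> 'p form) \<Rightarrow> 'i set \<Rightarrow> 'p form" where
  "maxi I \<phi> \<psi> D \<chi> K = And (good \<phi> \<psi> D \<chi> K)
     (BigAnd (\<lambda>L. Imp (And (Box (Imp (info \<phi> \<psi> K) (info \<phi> \<psi> L)))
                            (Dia (And (Neg (info \<phi> \<psi> K)) (info \<phi> \<psi> L))))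
                       (Neg (good \<phi> \<psi> D \<chi> L))) (Pow I))"

definition state :: "'j set \<Rightarrow> ('j \<Rightarrow> 'p form) \<Rightarrow> 'j set \<Rightarrow> 'p form" where
  "state J \<alpha> S = And (BigAnd \<alpha> S) (BigAnd (\<lambda>s. Neg (\<alpha> s)) (J - S))"

definition lamstar :: "'i set \<Rightarrow> ('i \<Rightarrow> 'p form) \<Rightarrow> ('i \<Rightarrow> 'p form) \<Rightarrow> ('i \<Rightarrow> 'n set)
    \<Rightarrow> ('n \<Rightarrow> 'p form) \<Rightarrow> 'j set \<Rightarrow> ('j \<Rightarrow> 'p form) \<Rightarrow> ('j \<Rightarrow> 'p form)
    \<Rightarrow> ('j \<Rightarrow> 'm set) \<Rightarrow> ('m \<Rightarrow> 'p form) \<Rightarrow> 'p form" where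
  "lamstar I \<phi> \<psi> D \<chi> J \<alpha> \<beta> E \<gamma> =
     BigAnd (\<lambda>K. Imp (maxi I \<phi> \<psi> D \<chi> K)
        (Box (Imp (info \<phi> \<psi> K)
           (BigAnd (\<lambda>S. Imp (state J \<alpha> S)
               (BigOr (\<lambda>s. And (Box (Imp (info \<phi> \<psi> K) (\<beta> s)))
                               (BigAnd (\<lambda>m. Dia (And (info \<phi> \<psi> K) (\<gamma> m))) (E s))) S))
             (Pow J))))) (Pow I)"

end

theory Submission
  imports Defs
begin

text \<open>
  Nonmodal formulas do not depend on the information state, so everything can be phrased with
  their extensions: \<open>P i, Q i\<close> for \<open>\<phi>\<^sub>i, \<psi>\<^sub>i\<close> and \<open>R i\<close> for the extensions of the \<open>\<chi>\<^sub>n\<close>, \<open>n \<in> D\<^sub>i\<close>.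
  If \<open>Y \<subseteq> \<lbrakk>\<Theta>\<rbrakk>\<^sup>Y\<close>, then \<open>Y \<subseteq> info\<^sub>K\<close> for the set \<open>K\<close> of disjuncts whose box and diamond parts
  hold in \<open>Y\<close>, and this \<open>K\<close> is good; conversely \<open>X \<inter> info\<^sub>K\<close> supports \<open>\<Theta>\<close> whenever \<open>good\<^sub>K\<close>
  holds. Hence the maximal substates of \<open>X\<close> supporting \<open>\<Theta>\<close> are precisely the states \<open>X \<inter> info\<^sub>K\<close>
  with \<open>max\<^sub>K\<close>, and \<open>\<Box>(info\<^sub>K \<rightarrow> \<dots>)\<close> in \<open>\<lambda>\<^sup>*\<close> evaluates \<open>\<Omega>\<close> on that state. There, exactly one
  \<open>state\<^sub>S\<close> holds at each world, namely for the set \<open>S\<close> of true \<open>\<alpha>\<^sub>s\<close>, so the conjunction over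
  \<open>S\<close> just reads off the disjunct of \<open>\<Omega>\<close> that holds.
\<close>

definition flat_sat :: "'i set \<Rightarrow> ('i \<Rightarrow> 'w set) \<Rightarrow> ('i \<Rightarrow> 'w set) \<Rightarrow> ('i \<Rightarrow> 'w set set)
    \<Rightarrow> 'w set \<Rightarrow> 'w \<Rightarrow> bool" where
  "flat_sat I P Q R Y v \<longleftrightarrow> (\<exists>i\<in>I. v \<in> P i \<and> Y \<subseteq> Q i \<and> (\<forall>C\<in>R i. \<exists>u\<in>Y. u \<in> C))"

locale flat_antecedent =
  fixes I :: "'i set" and P Q :: "'i \<Rightarrow> 'w set" and R :: "'i \<Rightarrow> 'w set set"
begin

definition info_set :: "'i set \<Rightarrow> 'w set" where
  "info_set K = (\<Union>k\<in>K. P k) \<inter> (\<Inter>k\<in>K. Q k)"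

definition good_in :: "'w set \<Rightarrow> 'i set \<Rightarrow> bool" where
  "good_in X K \<longleftrightarrow> (\<forall>k\<in>K. \<forall>C\<in>R k. \<exists>u\<in>X \<inter> info_set K. u \<in> C)"

definition maximal_good_in :: "'w set \<Rightarrow> 'i set \<Rightarrow> bool" where
  "maximal_good_in X K \<longleftrightarrow>
     good_in X K \<and> (\<forall>L\<subseteq>I. X \<inter> info_set K \<subset> X \<inter> info_set L \<longrightarrow> \<not> good_in X L)"

definition supports :: "'w set \<Rightarrow> bool" where
  "supports Y \<longleftrightarrow> (\<forall>v\<in>Y. flat_sat I P Q R Y v)"

definition maximal_support :: "'w set \<Rightarrow> 'w set \<Rightarrow> bool" where
  "maximal_support X Y \<longleftrightarrow> Y \<subseteq> X \<and> supports Y \<and> \<not> (\<exists>Y'. Y' \<subseteq> X \<and> supports Y' \<and> Y \<subset> Y')"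

definition support_index :: "'w set \<Rightarrow> 'i set" where
  "support_index Y = {i\<in>I. Y \<subseteq> Q i \<and> (\<forall>C\<in>R i. \<exists>u\<in>Y. u \<in> C)}"

lemma support_index_subset: "support_index Y \<subseteq> I"
  by (auto simp: support_index_def)

lemma supports_subset_info_set:
  assumes "supports Y"
  shows "Y \<subseteq> info_set (support_index Y)"
proof
  fix v assume "v \<in> Y"
  then obtain i where "i \<in> support_index Y" "v \<in> P i"
    using assms by (auto simp: supports_def flat_sat_def support_index_def)
  moreover have "v \<in> Q k" if "k \<in> support_index Y" for k
    using that \<open>v \<in> Y\<close> by (auto simp: support_index_def)
  ultimately show "v \<in> info_set (support_index Y)"
    by (auto simp: info_set_def)
qed

lemma supports_info_set:
  assumes "K \<subseteq> I" "good_in X K"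
  shows "supports (X \<inter> info_set K)"
  unfolding supports_def flat_sat_def
proof
  fix v assume "v \<in> X \<inter> info_set K"
  then obtain k where "k \<in> K" "v \<in> P k"
    by (auto simp: info_set_def)
  moreover have "X \<inter> info_set K \<subseteq> Q k"
    using \<open>k \<in> K\<close> by (auto simp: info_set_def)
  moreover have "\<forall>C\<in>R k. \<exists>u\<in>X \<inter> info_set K. u \<in> C"
    using \<open>k \<in> K\<close> assms(2) by (simp add: good_in_def)
  ultimately show "\<exists>i\<in>I. v \<in> P i \<and> X \<inter> info_set K \<subseteq> Q i \<and> (\<forall>C\<in>R i. \<exists>u\<in>X \<inter> info_set K. u \<in> C)"
    using assms(1) by blast
qed

lemma good_in_support_index:
  assumes "Y \<subseteq> X" "supports Y"
  shows "good_in X (support_index Y)"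
  unfolding good_in_def
proof (intro ballI)
  fix k C assume "k \<in> support_index Y" "C \<in> R k"
  then obtain u where "u \<in> Y" "u \<in> C"
    by (auto simp: support_index_def)
  then show "\<exists>u\<in>X \<inter> info_set (support_index Y). u \<in> C"
    using assms supports_subset_info_set by blast
qed

lemma maximal_support_imp_maximal_good:
  assumes "maximal_support X Y"
  shows "Y = X \<inter> info_set (support_index Y)" and "maximal_good_in X (support_index Y)"
proof -
  have Y: "Y \<subseteq> X" "supports Y" and max: "\<And>Y'. Y' \<subseteq> X \<Longrightarrow> supports Y' \<Longrightarrow> \<not> Y \<subset> Y'"
    using assms by (auto simp: maximal_support_def)
  have good: "good_in X (support_index Y)"
    using Y by (rule good_in_support_index)
  have "Y \<subseteq> X \<inter> info_set (support_index Y)"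
    using Y supports_subset_info_set by blast
  moreover have "supports (X \<inter> info_set (support_index Y))"
    using support_index_subset good by (rule supports_info_set)
  ultimately show Y_eq: "Y = X \<inter> info_set (support_index Y)"
    using max by blast
  have "\<not> good_in X L" if "L \<subseteq> I" "Y \<subset> X \<inter> info_set L" for L
    using max[of "X \<inter> info_set L"] supports_info_set that by blast
  with good Y_eq show "maximal_good_in X (support_index Y)"
    by (simp add: maximal_good_in_def)
qed

lemma maximal_good_imp_maximal_support:
  assumes "K \<subseteq> I" "maximal_good_in X K"
  shows "maximal_support X (X \<inter> info_set K)"
proof -
  have "supports (X \<inter> info_set K)"
    using assms supports_info_set by (simp add: maximal_good_in_def)
  moreover have "\<not> X \<inter> info_set K \<subset> Y'" if "Y' \<subseteq> X" "supports Y'" for Y'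
  proof
    assume less: "X \<inter> info_set K \<subset> Y'"
    have "Y' \<subseteq> X \<inter> info_set (support_index Y')"
      using that supports_subset_info_set by blast
    with less have "X \<inter> info_set K \<subset> X \<inter> info_set (support_index Y')"
      by blast
    moreover have "good_in X (support_index Y')"
      using that by (rule good_in_support_index)
    ultimately show False
      using assms(2) support_index_subset by (simp add: maximal_good_in_def)
  qed
  ultimately show ?thesis
    by (auto simp: maximal_support_def)
qed

lemma all_maximal_support_iff:
  "(\<forall>Y. maximal_support X Y \<longrightarrow> H Y) \<longleftrightarrow> (\<forall>K\<subseteq>I. maximal_good_in X K \<longrightarrow> H (X \<inter> info_set K))"
proof safe
  fix K assume "\<forall>Y. maximal_support X Y \<longrightarrow> H Y" "K \<subseteq> I" "maximal_good_in X K"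
  then show "H (X \<inter> info_set K)"
    using maximal_good_imp_maximal_support by blast
next
  fix Y assume H: "\<forall>K\<subseteq>I. maximal_good_in X K \<longrightarrow> H (X \<inter> info_set K)" and "maximal_support X Y"
  then have "H (X \<inter> info_set (support_index Y))"
    using maximal_support_imp_maximal_good(2) support_index_subset by blast
  then show "H Y"
    using maximal_support_imp_maximal_good(1)[OF \<open>maximal_support X Y\<close>] by simp
qed

end

lemma set_enum: "finite S \<Longrightarrow> set (enum S) = S"
  unfolding enum_def by (rule someI_ex) (simp add: finite_list)

lemma sat_Bot [simp]: "\<not> sat V w X Bot"
  by (simp add: Bot_def)

lemma sat_Top [simp]: "sat V w X Top"
  by (simp add: Top_def)

lemma sat_Or [simp]: "sat V w X (Or a b) \<longleftrightarrow> sat V w X a \<or> sat V w X b"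
  by (simp add: Or_def)

lemma sat_Imp [simp]: "sat V w X (Imp a b) \<longleftrightarrow> (sat V w X a \<longrightarrow> sat V w X b)"
  by (simp add: Imp_def)

lemma sat_Dia [simp]: "sat V w X (Dia a) \<longleftrightarrow> (\<exists>v\<in>X. sat V v X a)"
  by (simp add: Dia_def)

lemma sat_BigOrL: "sat V w X (BigOrL xs) \<longleftrightarrow> (\<exists>x\<in>set xs. sat V w X x)"
  by (induction xs) auto

lemma sat_BigAndL: "sat V w X (BigAndL xs) \<longleftrightarrow> (\<forall>x\<in>set xs. sat V w X x)"
  by (induction xs) auto

lemma sat_BigOr: "finite S \<Longrightarrow> sat V w X (BigOr f S) \<longleftrightarrow> (\<exists>x\<in>S. sat V w X (f x))"
  by (simp add: BigOr_def sat_BigOrL set_enum)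

lemma sat_BigAnd: "finite S \<Longrightarrow> sat V w X (BigAnd f S) \<longleftrightarrow> (\<forall>x\<in>S. sat V w X (f x))"
  by (simp add: BigAnd_def sat_BigAndL set_enum)

definition extension :: "('p \<Rightarrow> 'w set) \<Rightarrow> 'p form \<Rightarrow> 'w set" where
  "extension V f = {v. sat V v {} f}"

lemma sat_nonmodal_state_indep: "nonmodal f \<Longrightarrow> sat V v Y f \<longleftrightarrow> sat V v Z f"
  by (induction f) auto

lemma sat_nonmodal: "nonmodal f \<Longrightarrow> sat V v Y f \<longleftrightarrow> v \<in> extension V f"
  using sat_nonmodal_state_indep by (simp add: extension_def)

context
  fixes V :: "'p \<Rightarrow> 'w set" and \<phi> \<psi> :: "'i \<Rightarrow> 'p form" and D :: "'i \<Rightarrow> 'n set"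
    and \<chi> :: "'n \<Rightarrow> 'p form" and I :: "'i set"
  assumes finite: "finite I" "\<forall>i\<in>I. finite (D i)"
    and nonmodal: "\<forall>i\<in>I. nonmodal (\<phi> i) \<and> nonmodal (\<psi> i) \<and> (\<forall>n\<in>D i. nonmodal (\<chi> n))"
begin

interpretation A: flat_antecedent I "extension V \<circ> \<phi>" "extension V \<circ> \<psi>"
  "\<lambda>i. extension V ` \<chi> ` D i" .

lemma sat_disjunct_parts:
  "i \<in> I \<Longrightarrow> sat V u Y (\<phi> i) \<longleftrightarrow> u \<in> extension V (\<phi> i)"
  "i \<in> I \<Longrightarrow> sat V u Y (\<psi> i) \<longleftrightarrow> u \<in> extension V (\<psi> i)"
  "n \<in> D i \<Longrightarrow> i \<in> I \<Longrightarrow> sat V u Y (\<chi> n) \<longleftrightarrow> u \<in> extension V (\<chi> n)"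
  using nonmodal by (simp_all add: sat_nonmodal)

lemma sat_Theta:
  "sat V v Y (Theta I \<phi> \<psi> D \<chi>) \<longleftrightarrow>
    flat_sat I (extension V \<circ> \<phi>) (extension V \<circ> \<psi>) (\<lambda>i. extension V ` \<chi> ` D i) Y v"
  using finite by (auto simp: Theta_def flat_sat_def sat_BigOr sat_BigAnd sat_disjunct_parts)

lemma sat_info:
  assumes "K \<subseteq> I"
  shows "sat V u Y (info \<phi> \<psi> K) \<longleftrightarrow> u \<in> A.info_set K"
proof -
  have "finite K" using assms finite(1) by (rule finite_subset)
  then show ?thesis
    by (auto simp: info_def A.info_set_def sat_BigOr sat_BigAnd sat_disjunct_parts subsetD[OF assms])
qed

lemma sat_good:
  assumes "K \<subseteq> I"
  shows "sat V w X (good \<phi> \<psi> D \<chi> K) \<longleftrightarrow> A.good_in X K"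
proof -
  have "finite K" "\<forall>k\<in>K. finite (D k)" using assms finite finite_subset by auto
  then have "sat V w X (good \<phi> \<psi> D \<chi> K) \<longleftrightarrow>
      (\<forall>k\<in>K. \<forall>n\<in>D k. \<exists>u\<in>X. u \<in> A.info_set K \<and> u \<in> extension V (\<chi> n))"
    by (simp add: good_def sat_BigAnd sat_info[OF assms] sat_disjunct_parts subsetD[OF assms])
  then show ?thesis
    unfolding A.good_in_def by blast
qed

lemma sat_maxi:
  assumes "K \<subseteq> I"
  shows "sat V w X (maxi I \<phi> \<psi> D \<chi> K) \<longleftrightarrow> A.maximal_good_in X K"
  using finite(1)
  by (simp add: maxi_def A.maximal_good_in_def sat_BigAnd sat_good sat_info assms) blast

end

definition relativized :: "'j set \<Rightarrow> ('j \<Rightarrow> 'p form) \<Rightarrow> ('j \<Rightarrow> 'p form) \<Rightarrow> ('j \<Rightarrow> 'm set)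
    \<Rightarrow> ('m \<Rightarrow> 'p form) \<Rightarrow> 'p form \<Rightarrow> 'p form" where
  "relativized J \<alpha> \<beta> E \<gamma> \<iota> =
     BigAnd (\<lambda>S. Imp (state J \<alpha> S)
       (BigOr (\<lambda>s. And (Box (Imp \<iota> (\<beta> s))) (BigAnd (\<lambda>m. Dia (And \<iota> (\<gamma> m))) (E s))) S)) (Pow J)"

lemma lamstar_eq:
  "lamstar I \<phi> \<psi> D \<chi> J \<alpha> \<beta> E \<gamma> =
     BigAnd (\<lambda>K. Imp (maxi I \<phi> \<psi> D \<chi> K)
       (Box (Imp (info \<phi> \<psi> K) (relativized J \<alpha> \<beta> E \<gamma> (info \<phi> \<psi> K))))) (Pow I)"
  by (simp add: lamstar_def relativized_def)

context
  fixes V :: "'p \<Rightarrow> 'w set" and \<alpha> \<beta> :: "'j \<Rightarrow> 'p form" and E :: "'j \<Rightarrow> 'm set"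
    and \<gamma> :: "'m \<Rightarrow> 'p form" and J :: "'j set"
  assumes finite: "finite J" "\<forall>j\<in>J. finite (E j)"
    and nonmodal: "\<forall>j\<in>J. nonmodal (\<alpha> j) \<and> nonmodal (\<beta> j) \<and> (\<forall>m\<in>E j. nonmodal (\<gamma> m))"
begin

lemma sat_consequent_parts:
  "j \<in> J \<Longrightarrow> sat V u Y (\<alpha> j) \<longleftrightarrow> u \<in> extension V (\<alpha> j)"
  "j \<in> J \<Longrightarrow> sat V u Y (\<beta> j) \<longleftrightarrow> u \<in> extension V (\<beta> j)"
  "m \<in> E j \<Longrightarrow> j \<in> J \<Longrightarrow> sat V u Y (\<gamma> m) \<longleftrightarrow> u \<in> extension V (\<gamma> m)"
  using nonmodal by (simp_all add: sat_nonmodal)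

lemma sat_state:
  assumes "S \<subseteq> J"
  shows "sat V v Y (state J \<alpha> S) \<longleftrightarrow> S = {j\<in>J. v \<in> extension V (\<alpha> j)}"
proof -
  have "finite S" "finite (J - S)" using assms finite(1) finite_subset by auto
  then show ?thesis
    by (auto simp: state_def sat_BigAnd sat_consequent_parts subsetD[OF assms])
qed

lemma sat_relativized:
  assumes \<iota>: "\<And>u Y. sat V u Y \<iota> \<longleftrightarrow> u \<in> Z"
  shows "sat V v X (relativized J \<alpha> \<beta> E \<gamma> \<iota>) \<longleftrightarrow>
    flat_sat J (extension V \<circ> \<alpha>) (extension V \<circ> \<beta>) (\<lambda>j. extension V ` \<gamma> ` E j) (X \<inter> Z) v"
proof -
  define holds where "holds s \<longleftrightarrow>
    sat V v X (And (Box (Imp \<iota> (\<beta> s))) (BigAnd (\<lambda>m. Dia (And \<iota> (\<gamma> m))) (E s)))" for s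
  let ?T = "{j\<in>J. v \<in> extension V (\<alpha> j)}"
  \<comment> \<open>Exactly one \<open>state\<^sub>S\<close> holds at \<open>v\<close>, namely the one for \<open>?T\<close>.\<close>
  have "sat V v X (relativized J \<alpha> \<beta> E \<gamma> \<iota>) \<longleftrightarrow> (\<forall>S\<in>Pow J. S = ?T \<longrightarrow> (\<exists>s\<in>S. holds s))"
    using finite(1)
    by (auto simp: relativized_def holds_def sat_BigAnd sat_BigOr sat_state finite_subset)
  also have "\<dots> \<longleftrightarrow> (\<exists>j\<in>?T. holds j)"
    by auto
  also have "\<dots> \<longleftrightarrow>
    flat_sat J (extension V \<circ> \<alpha>) (extension V \<circ> \<beta>) (\<lambda>j. extension V ` \<gamma> ` E j) (X \<inter> Z) v"
    using finite(2) by (simp add: holds_def flat_sat_def sat_BigAnd sat_consequent_parts \<iota>) blast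
  finally show ?thesis .
qed

end

theorem proposition14:
  fixes W :: "'w set" and V :: "'p \<Rightarrow> 'w set" and w :: 'w and X :: "'w set"
    and I :: "'i set" and \<phi> \<psi> :: "'i \<Rightarrow> 'p form" and D :: "'i \<Rightarrow> 'n set" and \<chi> :: "'n \<Rightarrow> 'p form"
    and J :: "'j set" and \<alpha> \<beta> :: "'j \<Rightarrow> 'p form" and E :: "'j \<Rightarrow> 'm set" and \<gamma> :: "'m \<Rightarrow> 'p form"
  assumes "is_model W V" and "w \<in> W" and "X \<subseteq> W"
    and "finite I" and "finite J"
    and "\<forall>i\<in>I. finite (D i)" and "\<forall>j\<in>J. finite (E j)"
    and "\<forall>i\<in>I. nonmodal (\<phi> i) \<and> nonmodal (\<psi> i) \<and> (\<forall>n\<in>D i. nonmodal (\<chi> n))"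
    and "\<forall>j\<in>J. nonmodal (\<alpha> j) \<and> nonmodal (\<beta> j) \<and> (\<forall>m\<in>E j. nonmodal (\<gamma> m))"
  shows "sat V w X (Cond (Theta I \<phi> \<psi> D \<chi>) (Theta J \<alpha> \<beta> E \<gamma>))
         \<longleftrightarrow> sat V w X (lamstar I \<phi> \<psi> D \<chi> J \<alpha> \<beta> E \<gamma>)"
proof -
  interpret A: flat_antecedent I "extension V \<circ> \<phi>" "extension V \<circ> \<psi>" "\<lambda>i. extension V ` \<chi> ` D i" .
  let ?\<Omega> = "flat_sat J (extension V \<circ> \<alpha>) (extension V \<circ> \<beta>) (\<lambda>j. extension V ` \<gamma> ` E j)"
  have "sat V w X (Cond (Theta I \<phi> \<psi> D \<chi>) (Theta J \<alpha> \<beta> E \<gamma>)) \<longleftrightarrow>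
      (\<forall>Y. A.maximal_support X Y \<longrightarrow> (\<forall>v\<in>Y. ?\<Omega> Y v))"
    unfolding A.maximal_support_def A.supports_def
    by (simp only: sat.simps sat_Theta[OF assms(4,6,8)] sat_Theta[OF assms(5,7,9)]
        subset_Collect_iff subset_refl simp_thms)
  also have "\<dots> \<longleftrightarrow>
      (\<forall>K\<subseteq>I. A.maximal_good_in X K \<longrightarrow> (\<forall>v\<in>X \<inter> A.info_set K. ?\<Omega> (X \<inter> A.info_set K) v))"
    by (rule A.all_maximal_support_iff)
  also have "\<dots> \<longleftrightarrow> sat V w X (lamstar I \<phi> \<psi> D \<chi> J \<alpha> \<beta> E \<gamma>)"
  proof -
    have "sat V v X (relativized J \<alpha> \<beta> E \<gamma> (info \<phi> \<psi> K)) \<longleftrightarrow> ?\<Omega> (X \<inter> A.info_set K) v"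
      if "K \<subseteq> I" for K v
      using sat_info[OF assms(4,6,8) that] by (rule sat_relativized[OF assms(5,7,9)])
    then show ?thesis
      using assms(4)
      by (auto simp: lamstar_eq sat_BigAnd sat_info[OF assms(4,6,8)] sat_maxi[OF assms(4,6,8)])
  qed
  finally show ?thesis .
qed

end
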